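(* Let $m\ge1$ be an integer. Then: (I) $\sup\{\min_{i\in[0:m]}G_i(\boldsymbol\beta): 0<\beta_1<\cdots<\beta_m<\infty\}=2+2\cos\left(\frac{2\pi}{2m+2}\right)$; (II) $\sup\{\min_{i\in[0:m]}G_i(\boldsymbol\beta): 0<\beta_1<\cdots<\beta_m=\infty\}=2+2\cos\left(\frac{2\pi}{2m+1}\right)$; (III) $\sup\{\min_{i\in[0:m]}G_i(\boldsymbol\beta): 0=\beta_1<\cdots<\beta_m<\infty\}=2+2\cos\left(\frac{2\pi}{2m+1}\right)$; (IV) if $m\ge2$, $\sup\{\min_{i\in[0:m]}G_i(\boldsymbol\beta): 0=\beta_1<\cdots<\beta_m=\infty\}=2+2\cos\left(\frac{2\pi}{2m}\right)$.
   Context: Variables $\beta_i$ take values in the extended half-line $[0,\infty]$ with the conventions $1/0=\infty$, $1/\infty=0$, $x+\infty=\infty$. For $\boldsymbol\beta=(\beta_1,\dots,\beta_m)$ define $G_0(\boldsymbol\beta)=1+\frac{1}{\beta_1}$, $G_i(\boldsymbol\beta)=2+\beta_i+\frac{1}{\beta_{i+1}}$ for $i\in[1:m-1]$, and $G_m(\boldsymbol\beta)=1+\beta_m$. (In the paper, $\sigma_{n,m}$ denotes these optimal values minus $2$.) *)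

theory Defs
  imports "HOL-Analysis.Analysis"
begin

text \<open>Variables beta_i live in [0,\<infinity>], modelled as extended reals (ereal);
  in ereal, 1/0 = \<infinity>, 1/\<infinity> = 0 and x + \<infinity> = \<infinity> (for x \<noteq> -\<infinity>).
  A vector beta = (beta_1,...,beta_m) is a function nat \<Rightarrow> ereal, only indices 1..m matter.\<close>

definition G :: "nat \<Rightarrow> (nat \<Rightarrow> ereal) \<Rightarrow> nat \<Rightarrow> ereal" where
  "G m \<beta> i = (if i = 0 then 1 + 1 / \<beta> 1
              else if i < m then 2 + \<beta> i + 1 / \<beta> (i + 1)
              else 1 + \<beta> m)"

definition minG :: "nat \<Rightarrow> (nat \<Rightarrow> ereal) \<Rightarrow> ereal" where
  "minG m \<beta> = Min (G m \<beta> ` {0..m})"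

definition strict_chain :: "nat \<Rightarrow> (nat \<Rightarrow> ereal) \<Rightarrow> bool" where
  "strict_chain m \<beta> \<longleftrightarrow> (\<forall>i\<in>{1..<m}. \<beta> i < \<beta> (i + 1))"

end

theory Submission
  imports Defs
begin

text \<open>Only the coordinates of beta not pinned to 0 or \<infinity> are free; write them as a real chain
  x_0 < ... < x_(n-1). The finite G_i then read 1 + [beta_1 = 0] + 1/x_0, 2 + x_(k-1) + 1/x_k and
  1 + [beta_m = \<infinity>] + x_(n-1). A positive chain y on which all these terms take the same value c
  is optimal: if some chain x had all its terms above c, comparing term by term from the left
  would force x_k < y_k for every k, contradicting the last term. An equalizing chain is
  y_k = sin((k + p) \<theta>) / sin((k + p + 1) \<theta>), which satisfies y_k + 1/y_(k+1) = 2 cos \<theta>;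
  with p \<in> {1/2, 1} and \<theta> = pi / (n + 1 + (number of pinned coordinates) / 2) the sine is odd
  about both ends of the chain, which yields exactly the two boundary terms.\<close>

definition sine_ratio :: "real \<Rightarrow> real \<Rightarrow> nat \<Rightarrow> real" where
  "sine_ratio \<theta> p k = sin ((real k + p) * \<theta>) / sin ((real k + p + 1) * \<theta>)"

lemma sin_add_plus_sin_diff: "sin ((x::real) + y) + sin (x - y) = 2 * cos y * sin x"
  by (simp add: sin_add sin_diff)

lemma sin_add_times_sin_diff: "sin ((u::real) + v) * sin (u - v) = (sin u)\<^sup>2 - (sin v)\<^sup>2"
  unfolding sin_add sin_diff using sin_cos_squared_add [of u] sin_cos_squared_add [of v] by algebra

lemma sin_mult_pi_div_pos:
  assumes "0 < t" and "t < T"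
  shows "0 < sin (t * (pi / T))"
proof (rule sin_gt_zero)
  have "t * pi < T * pi"
    using assms by simp
  then show "0 < t * (pi / T)" "t * (pi / T) < pi"
    using assms by (simp_all add: divide_simps)
qed

lemma sine_ratio_recurrence:
  assumes "sin ((real k + p + 1) * \<theta>) \<noteq> 0"
  shows "sine_ratio \<theta> p k + 1 / sine_ratio \<theta> p (Suc k) = 2 * cos \<theta>"
proof -
  define u where "u = (real k + p + 1) * \<theta>"
  have shift: "(real k + p) * \<theta> = u - \<theta>" "(real (Suc k) + p) * \<theta> = u"
    "(real (Suc k) + p + 1) * \<theta> = u + \<theta>"
    by (simp_all add: u_def algebra_simps)
  have "sin (u - \<theta>) + sin (u + \<theta>) = 2 * cos \<theta> * sin u"
    using sin_add_plus_sin_diff [of u \<theta>] by (simp add: add.commute)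
  then show ?thesis
    using assms unfolding sine_ratio_def shift u_def [symmetric] by (simp add: field_simps)
qed

lemma sine_ratio_less:
  assumes "sin \<theta> \<noteq> 0" and "0 < sin ((real k + p) * \<theta>)" and "0 < sin ((real k + p + 1) * \<theta>)"
    and "0 < sin ((real k + p + 2) * \<theta>)"
  shows "sine_ratio \<theta> p k < sine_ratio \<theta> p (Suc k)"
proof -
  define u where "u = (real k + p + 1) * \<theta>"
  have shift: "(real k + p) * \<theta> = u - \<theta>" "(real (Suc k) + p) * \<theta> = u"
    "(real k + p + 2) * \<theta> = u + \<theta>" "(real (Suc k) + p + 1) * \<theta> = u + \<theta>"
    by (simp_all add: u_def algebra_simps)
  have "sin (u - \<theta>) * sin (u + \<theta>) < sin u * sin u"
    using assms(1) sin_add_times_sin_diff [of u \<theta>] by (simp add: mult.commute flip: power2_eq_square)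
  then show ?thesis
    using assms(2-4) unfolding sine_ratio_def shift u_def [symmetric] by (simp add: divide_simps)
qed

text \<open>Throughout, the flags z and w record the pinned boundary coordinates beta_1 = 0 and
  beta_m = \<infinity>; the free coordinates are beta_(z+1), ..., beta_(z+n), counting z as 0 or 1.\<close>

definition G_chain :: "bool \<Rightarrow> bool \<Rightarrow> nat \<Rightarrow> (nat \<Rightarrow> real) \<Rightarrow> nat \<Rightarrow> real" where
  "G_chain z w n x k =
    (if k = 0 then 1 + of_bool z + 1 / x 0
     else if k < n then 2 + x (k - 1) + 1 / x k
     else 1 + of_bool w + x (n - 1))"

lemma G_chain_min_le_equalized:
  assumes "1 \<le> n" and x_pos: "\<And>k. k < n \<Longrightarrow> 0 < x k" and y_pos: "\<And>k. k < n \<Longrightarrow> 0 < y k"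
    and y_eq: "\<And>k. k \<le> n \<Longrightarrow> G_chain z w n y k = c"
  shows "\<exists>k\<le>n. G_chain z w n x k \<le> c"
proof (rule ccontr)
  assume "\<not> ?thesis"
  then have x_gt: "c < G_chain z w n x k" if "k \<le> n" for k
    using that by fastforce
  have x_less: "x k < y k" if "k < n" for k
    using that
  proof (induction k)
    case 0
    then have "1 / y 0 < 1 / x 0"
      using x_gt [of 0] y_eq [of 0] by (simp add: G_chain_def)
    then show ?case
      using x_pos y_pos 0 by (simp add: divide_simps)
  next
    case (Suc k)
    then have "x k < y k" by simp
    moreover have "c < 2 + x k + 1 / x (Suc k)" "2 + y k + 1 / y (Suc k) = c"
      using x_gt [of "Suc k"] y_eq [of "Suc k"] Suc.prems by (simp_all add: G_chain_def)
    ultimately have "1 / y (Suc k) < 1 / x (Suc k)" by linarith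
    then show ?case
      using x_pos y_pos Suc.prems by (simp add: divide_simps)
  qed
  have "c < 1 + of_bool w + x (n - 1)" "1 + of_bool w + y (n - 1) = c"
    using x_gt [of n] y_eq [of n] assms(1) by (simp_all add: G_chain_def)
  then show False
    using x_less [of "n - 1"] assms(1) by simp
qed

definition chain_angle :: "nat \<Rightarrow> bool \<Rightarrow> bool \<Rightarrow> real" where
  "chain_angle n z w = pi / (real n + 1 + (of_bool z + of_bool w) / 2)"

definition equalizing_chain :: "nat \<Rightarrow> bool \<Rightarrow> bool \<Rightarrow> nat \<Rightarrow> real" where
  "equalizing_chain n z w = sine_ratio (chain_angle n z w) ((1 + of_bool z) / 2)"

lemma sin_chain_angle_pos:
  assumes "0 < t" and "t < real n + 1 + (of_bool z + of_bool w) / 2"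
  shows "0 < sin (t * chain_angle n z w)"
  unfolding chain_angle_def using assms by (rule sin_mult_pi_div_pos)

lemma equalizing_chain_pos:
  assumes "k < n"
  shows "0 < equalizing_chain n z w k"
proof -
  have "0 < sin ((real k + (1 + of_bool z) / 2 + c) * chain_angle n z w)" if "c \<le> 1" "0 \<le> c" for c
    using assms that by (intro sin_chain_angle_pos) (auto simp: of_bool_def)
  from this [of 0] this [of 1] show ?thesis
    by (simp add: equalizing_chain_def sine_ratio_def)
qed

lemma equalizing_chain_less:
  assumes "Suc k < n"
  shows "equalizing_chain n z w k < equalizing_chain n z w (Suc k)"
  unfolding equalizing_chain_def
proof (rule sine_ratio_less)
  have "0 < sin ((real k + (1 + of_bool z) / 2 + c) * chain_angle n z w)" if "c \<le> 2" "0 \<le> c" for c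
    using assms that by (intro sin_chain_angle_pos) (auto simp: of_bool_def)
  from this [of 0] this [of 1] this [of 2]
  show "0 < sin ((real k + (1 + of_bool z) / 2) * chain_angle n z w)"
    "0 < sin ((real k + (1 + of_bool z) / 2 + 1) * chain_angle n z w)"
    "0 < sin ((real k + (1 + of_bool z) / 2 + 2) * chain_angle n z w)"
    by simp_all
  show "sin (chain_angle n z w) \<noteq> 0"
    using sin_chain_angle_pos [of 1 n z w] assms by (simp add: add_pos_nonneg)
qed

lemma equalizing_chain_recurrence:
  assumes "Suc k < n"
  shows "equalizing_chain n z w k + 1 / equalizing_chain n z w (Suc k) = 2 * cos (chain_angle n z w)"
  unfolding equalizing_chain_def
proof (rule sine_ratio_recurrence)
  have "0 < sin ((real k + (1 + of_bool z) / 2 + 1) * chain_angle n z w)"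
    using assms by (intro sin_chain_angle_pos) (auto simp: of_bool_def)
  then show "sin ((real k + (1 + of_bool z) / 2 + 1) * chain_angle n z w) \<noteq> 0"
    by simp
qed

lemma inverse_equalizing_chain_first:
  assumes "1 \<le> n"
  shows "1 / equalizing_chain n z w 0 = 2 * cos (chain_angle n z w) + 1 - of_bool z"
proof -
  define \<theta> where "\<theta> = chain_angle n z w"
  define p where "p = (1 + of_bool z) / (2::real)"
  have "sin ((p + 1) * \<theta>) + sin ((p - 1) * \<theta>) = 2 * cos \<theta> * sin (p * \<theta>)"
    using sin_add_plus_sin_diff [of "p * \<theta>" \<theta>] by (simp add: algebra_simps)
  moreover have "sin ((p - 1) * \<theta>) = - (1 - of_bool z) * sin (p * \<theta>)"
    by (cases z) (simp_all add: p_def)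
  moreover have "0 < sin (p * \<theta>)"
    unfolding \<theta>_def using assms by (intro sin_chain_angle_pos) (auto simp: p_def)
  ultimately show ?thesis
    by (simp add: equalizing_chain_def sine_ratio_def \<theta>_def [symmetric] p_def [symmetric]
        add.commute field_simps)
qed

lemma equalizing_chain_last:
  assumes "1 \<le> n"
  shows "equalizing_chain n z w (n - 1) = 2 * cos (chain_angle n z w) + 1 - of_bool w"
proof -
  define \<theta> where "\<theta> = chain_angle n z w"
  define T where "T = real n + 1 + (of_bool z + of_bool w) / 2"
  define u where "u = real n + (1 + of_bool z) / 2"
  have T: "\<theta> = pi / T" "0 < T"
    by (simp_all add: \<theta>_def chain_angle_def T_def add_pos_nonneg)
  have "sin ((u + 1) * \<theta>) + sin ((u - 1) * \<theta>) = 2 * cos \<theta> * sin (u * \<theta>)"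
    using sin_add_plus_sin_diff [of "u * \<theta>" \<theta>] by (simp add: algebra_simps)
  moreover have "sin ((u + 1) * \<theta>) = - (1 - of_bool w) * sin (u * \<theta>)"
  proof (cases w)
    case True
    then have "(u + 1) * \<theta> = pi"
      using T by (simp add: T_def u_def field_simps)
    then show ?thesis
      using True by simp
  next
    case False
    then have "(u + 1) * \<theta> = \<theta> / 2 + pi" "u * \<theta> = pi - \<theta> / 2"
      using T by (simp_all add: T_def u_def field_simps)
    then show ?thesis
      using False by (simp add: sin_periodic_pi)
  qed
  moreover have "0 < sin (u * \<theta>)"
    unfolding \<theta>_def by (intro sin_chain_angle_pos) (auto simp: u_def)
  moreover have index: "real (n - 1) + (1 + of_bool z) / 2 = u - 1"
    "real (n - 1) + (1 + of_bool z) / 2 + 1 = u"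
    using assms by (simp_all add: u_def of_nat_diff)
  ultimately show ?thesis
    unfolding equalizing_chain_def sine_ratio_def \<theta>_def [symmetric] index by (simp add: field_simps)
qed

lemma G_chain_equalizing_chain:
  assumes "1 \<le> n" and "k \<le> n"
  shows "G_chain z w n (equalizing_chain n z w) k = 2 + 2 * cos (chain_angle n z w)"
proof -
  consider "k = 0" | j where "k = Suc j" "Suc j < n" | "k = n"
    using assms(2) by (cases k) fastforce+
  then show ?thesis
  proof cases
    case 1
    then show ?thesis
      using inverse_equalizing_chain_first [OF assms(1), of z w] by (simp add: G_chain_def)
  next
    case 2
    then show ?thesis
      using equalizing_chain_recurrence [of j n z w] by (simp add: G_chain_def)
  next
    case 3
    then show ?thesis
      using equalizing_chain_last [OF assms(1), of z w] assms(1) by (simp add: G_chain_def)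
  qed
qed

lemma G_eq_G_chain:
  assumes m: "m = of_bool z + n + of_bool w" and "1 \<le> n" and "k \<le> n"
    and zero: "z \<Longrightarrow> \<beta> 1 = 0" and inf: "w \<Longrightarrow> \<beta> m = \<infinity>"
    and x: "\<And>j. j < n \<Longrightarrow> \<beta> (of_bool z + Suc j) = ereal (x j)"
    and pos: "\<And>j. j < n \<Longrightarrow> 0 < x j"
  shows "G m \<beta> (of_bool z + k) = ereal (G_chain z w n x k)"
proof -
  consider "k = 0" | "0 < k" "k < n" | "k = n"
    using assms(3) by linarith
  then show ?thesis
  proof cases
    case 1
    then show ?thesis
      using x [of 0] pos [of 0] zero m assms(2)
      by (cases z) (auto simp: G_def G_chain_def one_ereal_def)
  next
    case 2
    then show ?thesis
      using x [of "k - 1"] x [of k] pos [of k] m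
      by (auto simp: G_def G_chain_def one_ereal_def)
  next
    case 3
    then show ?thesis
      using x [of "n - 1"] inf m assms(2)
      by (cases w) (auto simp: G_def G_chain_def one_ereal_def)
  qed
qed

lemma minG_eq_Min_G_chain:
  assumes m: "m = of_bool z + n + of_bool w" and "1 \<le> n"
    and zero: "z \<Longrightarrow> \<beta> 1 = 0" and inf: "w \<Longrightarrow> \<beta> m = \<infinity>"
    and x: "\<And>j. j < n \<Longrightarrow> \<beta> (of_bool z + Suc j) = ereal (x j)"
    and pos: "\<And>j. j < n \<Longrightarrow> 0 < x j"
  shows "minG m \<beta> = ereal (Min (G_chain z w n x ` {..n}))"
  unfolding minG_def
proof (rule Min_eqI)
  define M where "M = Min (G_chain z w n x ` {..n})"
  have G_interior: "G m \<beta> (of_bool z + k) = ereal (G_chain z w n x k)" if "k \<le> n" for k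
    using G_eq_G_chain [OF assms(1,2) that zero inf x pos] by blast
  show "finite (G m \<beta> ` {0..m})"
    by simp
  show "ereal M \<le> g" if g: "g \<in> G m \<beta> ` {0..m}" for g
  proof -
    obtain i where i: "i \<le> m" "g = G m \<beta> i"
      using g by auto
    consider "z" "i = 0" | "w" "i = m" | "of_bool z \<le> i" "i - of_bool z \<le> n"
      using i(1) m by (cases z; cases w; cases "i = 0"; cases "i = m") auto
    then show ?thesis
    proof cases
      case 1
      then show ?thesis
        using zero i by (simp add: G_def divide_ereal_def)
    next
      case 2
      then show ?thesis
        using inf i m assms(2) by (simp add: G_def)
    next
      case 3
      then show ?thesis
        using i G_interior [of "i - of_bool z"] by (simp add: M_def)
    qed
  qed
  have "M \<in> G_chain z w n x ` {..n}"
    unfolding M_def by (rule Min_in) auto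
  then obtain k where "k \<le> n" "M = G_chain z w n x k"
    by auto
  then show "ereal M \<in> G m \<beta> ` {0..m}"
    using G_interior m by (intro image_eqI [of _ _ "of_bool z + k"]) auto
qed

definition admissible :: "nat \<Rightarrow> bool \<Rightarrow> bool \<Rightarrow> (nat \<Rightarrow> ereal) \<Rightarrow> bool" where
  "admissible m z w \<beta> \<longleftrightarrow>
     (if z then 0 = \<beta> 1 else 0 < \<beta> 1) \<and> strict_chain m \<beta> \<and> (if w then \<beta> m = \<infinity> else \<beta> m < \<infinity>)"

definition pad_chain :: "bool \<Rightarrow> nat \<Rightarrow> (nat \<Rightarrow> real) \<Rightarrow> nat \<Rightarrow> ereal" where
  "pad_chain z n x i =
    (if i \<le> of_bool z then 0 else if i \<le> of_bool z + n then ereal (x (i - of_bool z - 1)) else \<infinity>)"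

lemma strict_chain_less:
  assumes "strict_chain m \<beta>" and "1 \<le> i" and "i < j" and "j \<le> m"
  shows "\<beta> i < \<beta> j"
  using assms(3,4)
proof (induction j)
  case (Suc j)
  have "\<beta> j < \<beta> (Suc j)"
    using assms(1,2) Suc.prems unfolding strict_chain_def by auto
  then show ?case
    using Suc by (cases "i = j") auto
qed simp

lemma admissible_interior:
  assumes "admissible m z w \<beta>" and m: "m = of_bool z + n + of_bool w" and "j < n"
  shows "0 < \<beta> (of_bool z + Suc j)" and "\<beta> (of_bool z + Suc j) < \<infinity>"
proof -
  have chain: "strict_chain m \<beta>"
    using assms(1) by (simp add: admissible_def)
  show "0 < \<beta> (of_bool z + Suc j)"
  proof (cases "of_bool z + Suc j = 1")
    case True
    then show ?thesis
      using assms(1) by (simp add: admissible_def)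
  next
    case False
    then have "\<beta> 1 < \<beta> (of_bool z + Suc j)"
      using m assms(3) by (intro strict_chain_less [OF chain]) auto
    moreover have "0 \<le> \<beta> 1"
      using assms(1) by (auto simp: admissible_def split: if_splits)
    ultimately show ?thesis
      by simp
  qed
  show "\<beta> (of_bool z + Suc j) < \<infinity>"
  proof (cases w)
    case True
    then have "\<beta> (of_bool z + Suc j) < \<beta> m"
      using m assms(3) by (intro strict_chain_less [OF chain]) auto
    then show ?thesis
      using True assms(1) by (simp add: admissible_def)
  next
    case False
    then have "\<beta> (of_bool z + Suc j) \<le> \<beta> m"
      using m assms(3) strict_chain_less [OF chain, of "of_bool z + Suc j" m]
      by (cases "of_bool z + Suc j = m") auto
    moreover have "\<beta> m < \<infinity>"
      using False assms(1) by (simp add: admissible_def)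
    ultimately show ?thesis
      by (rule le_less_trans)
  qed
qed

lemma admissible_pad_chain:
  assumes m: "m = of_bool z + n + of_bool w" and "1 \<le> n"
    and pos: "\<And>j. j < n \<Longrightarrow> 0 < x j" and mono: "\<And>j. Suc j < n \<Longrightarrow> x j < x (Suc j)"
  shows "admissible m z w (pad_chain z n x)"
  unfolding admissible_def
proof (intro conjI)
  show "if z then 0 = pad_chain z n x 1 else 0 < pad_chain z n x 1"
    using pos [of 0] assms(2) by (simp add: pad_chain_def)
  show "if w then pad_chain z n x m = \<infinity> else pad_chain z n x m < \<infinity>"
    using m by (simp add: pad_chain_def)
  show "strict_chain m (pad_chain z n x)"
    unfolding strict_chain_def
  proof
    fix i assume "i \<in> {1..<m}"
    then consider "i = of_bool z" | "of_bool z < i" "i < of_bool z + n" | "i = of_bool z + n"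
      using m by (cases z; cases w; cases "i = of_bool z"; cases "i = of_bool z + n") auto
    then show "pad_chain z n x i < pad_chain z n x (i + 1)"
    proof cases
      case 1
      then show ?thesis
        using pos [of 0] assms(2) \<open>i \<in> {1..<m}\<close> by (simp add: pad_chain_def)
    next
      case 2
      then show ?thesis
        using mono [of "i - of_bool z - 1"] by (simp add: pad_chain_def Suc_diff_Suc)
    qed (simp add: pad_chain_def)
  qed
qed

lemma Sup_minG_nondegenerate:
  assumes m: "m = of_bool z + n + of_bool w" and "1 \<le> n"
  shows "Sup {minG m \<beta> | \<beta>. admissible m z w \<beta>} = ereal (2 + 2 * cos (chain_angle n z w))"
proof -
  let ?y = "equalizing_chain n z w" and ?c = "2 + 2 * cos (chain_angle n z w)"
  have "minG m (pad_chain z n ?y) = ereal (Min (G_chain z w n ?y ` {..n}))"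
    using m by (intro minG_eq_Min_G_chain [OF m assms(2)]) (auto simp: pad_chain_def equalizing_chain_pos)
  also have "G_chain z w n ?y ` {..n} = {?c}"
    using G_chain_equalizing_chain [OF assms(2)] by auto
  finally have "minG m (pad_chain z n ?y) = ereal ?c"
    by simp
  moreover have "admissible m z w (pad_chain z n ?y)"
    using equalizing_chain_pos equalizing_chain_less by (intro admissible_pad_chain [OF m assms(2)])
  ultimately have attained: "ereal ?c \<in> {minG m \<beta> | \<beta>. admissible m z w \<beta>}"
    by (auto intro!: exI [of _ "pad_chain z n ?y"])
  have bounded: "s \<le> ereal ?c" if s_mem: "s \<in> {minG m \<beta> | \<beta>. admissible m z w \<beta>}" for s
  proof -
    obtain \<beta> where s: "s = minG m \<beta>" and adm: "admissible m z w \<beta>"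
      using s_mem by blast
    have finite_pos: "e = ereal (real_of_ereal e) \<and> 0 < real_of_ereal e"
      if "0 < e" "e < \<infinity>" for e :: ereal
      using that by (cases e) auto
    define x where "x j = real_of_ereal (\<beta> (of_bool z + Suc j))" for j
    have x: "\<beta> (of_bool z + Suc j) = ereal (x j)" "0 < x j" if "j < n" for j
      using finite_pos [OF admissible_interior [OF adm m that]] unfolding x_def by auto
    have s_eq: "s = ereal (Min (G_chain z w n x ` {..n}))"
      unfolding s using adm x by (intro minG_eq_Min_G_chain [OF m assms(2)]) (auto simp: admissible_def)
    have "\<exists>k\<le>n. G_chain z w n x k \<le> ?c"
      by (intro G_chain_min_le_equalized [where y = ?y] assms(2) x(2)
          equalizing_chain_pos G_chain_equalizing_chain)
    then obtain k where "k \<le> n" "G_chain z w n x k \<le> ?c"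
      by blast
    then have "Min (G_chain z w n x ` {..n}) \<le> ?c"
      by (intro Min.coboundedI [THEN order_trans]) auto
    then show "s \<le> ereal ?c"
      using s_eq by simp
  qed
  show ?thesis
    using attained bounded by (rule cSup_eq_maximum)
qed

lemma minG_degenerate:
  assumes "admissible m z w \<beta>" and "m = of_bool z + of_bool w" and "1 \<le> m"
  shows "minG m \<beta> = ereal (real m)"
  using assms
  by (cases z; cases w)
    (auto simp: admissible_def minG_def G_def atLeast0_atMost_Suc divide_ereal_def one_ereal_def)

lemma Sup_minG_degenerate:
  assumes m: "m = of_bool z + of_bool w" and "1 \<le> m"
  shows "Sup {minG m \<beta> | \<beta>. admissible m z w \<beta>} = ereal (real m)"
proof (rule cSup_eq_maximum)
  let ?\<beta> = "\<lambda>i. if i \<le> of_bool z then 0 else \<infinity> :: ereal"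
  have "admissible m z w ?\<beta>"
    using assms by (cases z; cases w) (auto simp: admissible_def strict_chain_def)
  then show "ereal (real m) \<in> {minG m \<beta> | \<beta>. admissible m z w \<beta>}"
    using minG_degenerate [OF _ assms] by (intro CollectI exI [of _ ?\<beta>]) simp
qed (use minG_degenerate [OF _ assms] in auto)

lemma Sup_minG:
  assumes "1 \<le> m" and "of_bool z + of_bool w \<le> m"
  shows "Sup {minG m \<beta> | \<beta>. admissible m z w \<beta>}
    = ereal (2 + 2 * cos (2 * pi / (2 * real m + 2 - of_bool z - of_bool w)))"
proof (cases "of_bool z + of_bool w = m")
  case True
  then have "m = 1 \<and> 2 * pi / (2 * real m + 2 - of_bool z - of_bool w) = 2 * pi / 3
    \<or> m = 2 \<and> 2 * pi / (2 * real m + 2 - of_bool z - of_bool w) = pi / 2"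
    using assms(1) by (cases z; cases w) auto
  then show ?thesis
    using Sup_minG_degenerate [OF True [symmetric] assms(1)] by (auto simp: cos_120)
next
  case False
  define n where "n = m - of_bool z - of_bool w"
  have m: "m = of_bool z + n + of_bool w" and "1 \<le> n"
    using assms(2) False by (simp_all add: n_def)
  have "chain_angle n z w = 2 * pi / (2 * real m + 2 - of_bool z - of_bool w)"
    unfolding chain_angle_def m by (simp add: field_simps)
  then show ?thesis
    using Sup_minG_nondegenerate [OF m \<open>1 \<le> n\<close>] by simp
qed

theorem proposition2:
  fixes m :: nat
  assumes "m \<ge> 1"
  shows
    "(Sup {minG m \<beta> | \<beta>. 0 < \<beta> 1 \<and> strict_chain m \<beta> \<and> \<beta> m < \<infinity>}
       = ereal (2 + 2 * cos (2 * pi / (2 * real m + 2))))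
   \<and> (Sup {minG m \<beta> | \<beta>. 0 < \<beta> 1 \<and> strict_chain m \<beta> \<and> \<beta> m = \<infinity>}
       = ereal (2 + 2 * cos (2 * pi / (2 * real m + 1))))
   \<and> (Sup {minG m \<beta> | \<beta>. 0 = \<beta> 1 \<and> strict_chain m \<beta> \<and> \<beta> m < \<infinity>}
       = ereal (2 + 2 * cos (2 * pi / (2 * real m + 1))))
   \<and> (m \<ge> 2 \<longrightarrow>
     Sup {minG m \<beta> | \<beta>. 0 = \<beta> 1 \<and> strict_chain m \<beta> \<and> \<beta> m = \<infinity>}
       = ereal (2 + 2 * cos (2 * pi / (2 * real m))))"
  using assms Sup_minG [OF assms, of False False] Sup_minG [OF assms, of False True]
    Sup_minG [OF assms, of True False] Sup_minG [of m True True]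
  by (simp add: admissible_def algebra_simps)

end
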